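(* Let $\mathscr T=(V,\mathcal E)$ be the directed Cartesian product of locally finite, rooted directed trees $\mathscr T_1,\dots,\mathscr T_d$, and let $S_{\boldsymbol\lambda}=(S_1,\dots,S_d)$ be a commuting multishift on $\mathscr T$. Let $E=\bigcap_{j=1}^d\ker S_j^*$ be the joint kernel of $S_{\boldsymbol\lambda}^*$. Then $S_{\boldsymbol\lambda}$ possesses the wandering subspace property, i.e. $$l^2(V)=\bigvee_{\alpha\in\mathbb N^d}S_{\boldsymbol\lambda}^{\alpha}E ,$$ where $\bigvee$ denotes the closed linear span.
   Context: A directed tree is a directed graph $(V,\mathcal E)$ ($\mathcal E\subseteq V\times V$ with no loops) that has no circuits, is connected (any two distinct vertices are joined by a path when orientation is ignored), and in which each vertex having an incoming edge has exactly one (its parent $\mathsf{par}(v)$). It is rooted if it has a (unique) vertex $\mathsf{root}$ with no incoming edge. $\mathsf{Chi}(u)=\{v:(u,v)\in\mathcal E\}$. The tree is locally finite if each $\mathsf{Chi}(u)$ is finite. Standing assumption: all directed trees are leafless (every $\mathsf{Chi}(u)\ne\emptyset$). Given rooted directed trees $\mathscr T_j=(V_j,\mathcal E_j)$ with roots $\mathsf{root}_j$, their directed Cartesian product is $\mathscr T=(V,\mathcal E)$ with $V=V_1\times\dots\times V_d$ (assumed countably infinite) and $(v,w)\in\mathcal E$ iff for some $k$, $(v_k,w_k)\in\mathcal E_k$ and $w_j=v_j$ for $j\ne k$. Put $\mathsf{root}=(\mathsf{root}_1,\dots,\mathsf{root}_d)$, $V^\circ=V\setminus\{\mathsf{root}\}$,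 $\mathsf{Chi}_j(v)=\{w\in V: w_j\in\mathsf{Chi}(v_j),\ w_k=v_k\ (k\neq j)\}$, and for $v_j\ne\mathsf{root}_j$ let $\mathsf{par}_j(v)$ be $v$ with $v_j$ replaced by $\mathsf{par}(v_j)$. $l^2(V)$ has orthonormal basis $\{e_v\}_{v\in V}$. Given positive numbers $\{\lambda^{(j)}_v: v\in V^\circ,1\le j\le d\}$, the multishift $S_{\boldsymbol\lambda}=(S_1,\dots,S_d)$ is $(S_jf)(v)=\lambda^{(j)}_vf(\mathsf{par}_j(v))$ if $v_j\ne\mathsf{root}_j$ and $0$ otherwise; each $S_j$ is assumed bounded on $l^2(V)$, so $S_je_v=\sum_{w\in\mathsf{Chi}_j(v)}\lambda^{(j)}_we_w$. Commuting means $S_iS_j=S_jS_i$ for all $i,j$; $S^\alpha_{\boldsymbol\lambda}=S_1^{\alpha_1}\cdots S_d^{\alpha_d}$. *)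

theory Defs
  imports "HOL-Analysis.Analysis"
begin

definition directed_tree :: "'a set \<Rightarrow> ('a \<times> 'a) set \<Rightarrow> bool" where
  "directed_tree V E \<longleftrightarrow>
     E \<subseteq> V \<times> V \<and>
     (\<forall>v. (v, v) \<notin> E) \<and>
     (\<forall>v. (v, v) \<notin> E\<^sup>+) \<and>
     (\<forall>v\<in>V. \<forall>w\<in>V. v \<noteq> w \<longrightarrow> (v, w) \<in> (E \<union> E\<inverse>)\<^sup>*) \<and>
     (\<forall>v. (\<exists>u. (u, v) \<in> E) \<longrightarrow> (\<exists>!u. (u, v) \<in> E))"

definition has_root :: "'a set \<Rightarrow> ('a \<times> 'a) set \<Rightarrow> bool" where
  "has_root V E \<longleftrightarrow> (\<exists>r\<in>V. \<not> (\<exists>u. (u, r) \<in> E))"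

definition tree_root :: "'a set \<Rightarrow> ('a \<times> 'a) set \<Rightarrow> 'a" where
  "tree_root V E = (THE r. r \<in> V \<and> \<not> (\<exists>u. (u, r) \<in> E))"

definition Chi :: "('a \<times> 'a) set \<Rightarrow> 'a \<Rightarrow> 'a set" where
  "Chi E u = {v. (u, v) \<in> E}"

definition par :: "('a \<times> 'a) set \<Rightarrow> 'a \<Rightarrow> 'a" where
  "par E v = (THE u. (u, v) \<in> E)"

definition locally_finite :: "'a set \<Rightarrow> ('a \<times> 'a) set \<Rightarrow> bool" where
  "locally_finite V E \<longleftrightarrow> (\<forall>u\<in>V. finite (Chi E u))"

definition leafless :: "'a set \<Rightarrow> ('a \<times> 'a) set \<Rightarrow> bool" where
  "leafless V E \<longleftrightarrow> (\<forall>u\<in>V. Chi E u \<noteq> {})"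

definition prod_vertices :: "nat \<Rightarrow> (nat \<Rightarrow> 'a set) \<Rightarrow> (nat \<Rightarrow> 'a) set" where
  "prod_vertices d Vs = {v. (\<forall>j<d. v j \<in> Vs j) \<and> (\<forall>j\<ge>d. v j = undefined)}"

definition prod_root :: "nat \<Rightarrow> (nat \<Rightarrow> 'a set) \<Rightarrow> (nat \<Rightarrow> ('a \<times> 'a) set) \<Rightarrow> nat \<Rightarrow> 'a" where
  "prod_root d Vs Es = (\<lambda>j. if j < d then tree_root (Vs j) (Es j) else undefined)"

definition par_j :: "(nat \<Rightarrow> ('a \<times> 'a) set) \<Rightarrow> nat \<Rightarrow> (nat \<Rightarrow> 'a) \<Rightarrow> (nat \<Rightarrow> 'a)" where
  "par_j Es j v = v(j := par (Es j) (v j))"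

definition l2 :: "'v set \<Rightarrow> ('v \<Rightarrow> complex) set" where
  "l2 V = {f. (\<forall>v. v \<notin> V \<longrightarrow> f v = 0) \<and> (\<lambda>v. (cmod (f v))\<^sup>2) summable_on V}"

definition l2inner :: "'v set \<Rightarrow> ('v \<Rightarrow> complex) \<Rightarrow> ('v \<Rightarrow> complex) \<Rightarrow> complex" where
  "l2inner V f g = (\<Sum>\<^sub>\<infinity>v\<in>V. f v * cnj (g v))"

definition l2norm :: "'v set \<Rightarrow> ('v \<Rightarrow> complex) \<Rightarrow> real" where
  "l2norm V f = sqrt (\<Sum>\<^sub>\<infinity>v\<in>V. (cmod (f v))\<^sup>2)"

definition bounded_op :: "'v set \<Rightarrow> (('v \<Rightarrow> complex) \<Rightarrow> ('v \<Rightarrow> complex)) \<Rightarrow> bool" where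
  "bounded_op V T \<longleftrightarrow> (\<forall>f\<in>l2 V. T f \<in> l2 V) \<and>
     (\<forall>f\<in>l2 V. \<forall>g\<in>l2 V. \<forall>c. T (\<lambda>v. f v + c * g v) = (\<lambda>v. T f v + c * T g v)) \<and>
     (\<exists>C. \<forall>f\<in>l2 V. l2norm V (T f) \<le> C * l2norm V f)"

definition adj :: "'v set \<Rightarrow> (('v \<Rightarrow> complex) \<Rightarrow> ('v \<Rightarrow> complex)) \<Rightarrow> ('v \<Rightarrow> complex) \<Rightarrow> ('v \<Rightarrow> complex)" where
  "adj V T f = (THE h. h \<in> l2 V \<and> (\<forall>g\<in>l2 V. l2inner V (T g) f = l2inner V g h))"

definition lin_span :: "('v \<Rightarrow> complex) set \<Rightarrow> ('v \<Rightarrow> complex) set" where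
  "lin_span A = {g. \<exists>n (c :: nat \<Rightarrow> complex) h. (\<forall>i<n. h i \<in> A) \<and>
                      g = (\<lambda>v. \<Sum>i<n. c i * h i v)}"

definition closed_span :: "'v set \<Rightarrow> ('v \<Rightarrow> complex) set \<Rightarrow> ('v \<Rightarrow> complex) set" where
  "closed_span V A = {f \<in> l2 V. \<forall>e>0. \<exists>g\<in>lin_span A. l2norm V (\<lambda>v. f v - g v) < e}"

definition multishift ::
  "nat \<Rightarrow> (nat \<Rightarrow> 'a set) \<Rightarrow> (nat \<Rightarrow> ('a \<times> 'a) set) \<Rightarrow> (nat \<Rightarrow> (nat \<Rightarrow> 'a) \<Rightarrow> real)
     \<Rightarrow> nat \<Rightarrow> ((nat \<Rightarrow> 'a) \<Rightarrow> complex) \<Rightarrow> ((nat \<Rightarrow> 'a) \<Rightarrow> complex)" where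
  "multishift d Vs Es lam j f = (\<lambda>v.
     if v \<in> prod_vertices d Vs \<and> v j \<noteq> tree_root (Vs j) (Es j)
     then complex_of_real (lam j v) * f (par_j Es j v) else 0)"

fun mpow :: "(nat \<Rightarrow> 'f \<Rightarrow> 'f) \<Rightarrow> (nat \<Rightarrow> nat) \<Rightarrow> nat \<Rightarrow> 'f \<Rightarrow> 'f" where
  "mpow S \<alpha> 0 = id"
| "mpow S \<alpha> (Suc k) = mpow S \<alpha> k \<circ> (S k ^^ \<alpha> k)"

definition joint_adj_kernel :: "'v set \<Rightarrow> nat \<Rightarrow> (nat \<Rightarrow> ('v \<Rightarrow> complex) \<Rightarrow> ('v \<Rightarrow> complex)) \<Rightarrow> ('v \<Rightarrow> complex) set" where
  "joint_adj_kernel V d S = {f \<in> l2 V. \<forall>j<d. adj V (S j) f = (\<lambda>_. 0)}"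

end

theory Submission
  imports Defs
begin

text \<open>
  Let \<open>A\<close> be the union of the orbits \<open>S\<^sup>\<alpha> E\<close>; by commutativity \<open>A\<close> is invariant under every
  \<open>S\<^sub>j\<close>. Grade the vertices by their total depth \<open>|v| = \<Sum>\<^sub>j depth\<^sub>j v\<^sub>j\<close>; each grade is finite,
  and \<open>S\<^sub>j e\<^sub>u\<close> lives on the grade \<open>|u| + 1\<close>. By induction on \<open>|v|\<close>, every \<open>e\<^sub>v\<close> lies in the
  linear span of \<open>A\<close>: project \<open>e\<^sub>v\<close>, inside the finite-dimensional space of functions on the grade
  of \<open>v\<close>, onto the span of the vectors \<open>S\<^sub>j e\<^sub>u\<close> with \<open>|u| + 1 = |v|\<close>, which are in the span of
  \<open>A\<close> by induction. The residue is orthogonal to every \<open>S\<^sub>j e\<^sub>u\<close>, hence, the shifts being local,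
  to the range of every \<open>S\<^sub>j\<close>; so it lies in \<open>E \<subseteq> A\<close>. Finitely supported functions are dense
  in \<open>l\<^sup>2(V)\<close>.
\<close>

inductive_set finspan :: "('v \<Rightarrow> complex) set \<Rightarrow> ('v \<Rightarrow> complex) set" for A where
  finspan_zero: "(\<lambda>_. 0) \<in> finspan A"
| finspan_step: "a \<in> A \<Longrightarrow> f \<in> finspan A \<Longrightarrow> (\<lambda>v. c * a v + f v) \<in> finspan A"

lemma finspan_add: "f \<in> finspan A \<Longrightarrow> g \<in> finspan A \<Longrightarrow> (\<lambda>v. f v + g v) \<in> finspan A"
proof (induction f rule: finspan.induct)
  case (finspan_step a f c)
  have "(\<lambda>v. c * a v + f v + g v) = (\<lambda>v. c * a v + (f v + g v))"
    by (simp add: algebra_simps)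
  then show ?case using finspan_step finspan.finspan_step by metis
qed simp

lemma finspan_scale: "f \<in> finspan A \<Longrightarrow> (\<lambda>v. k * f v) \<in> finspan A"
proof (induction f rule: finspan.induct)
  case (finspan_step a f c)
  have "(\<lambda>v. k * (c * a v + f v)) = (\<lambda>v. (k * c) * a v + k * f v)"
    by (simp add: algebra_simps)
  then show ?case using finspan_step finspan.finspan_step by metis
qed (simp add: finspan_zero)

lemma finspan_superset: "a \<in> A \<Longrightarrow> a \<in> finspan A"
  using finspan_step[OF _ finspan_zero, of a A 1] by simp

lemma finspan_diff: "f \<in> finspan A \<Longrightarrow> g \<in> finspan A \<Longrightarrow> (\<lambda>v. f v - g v) \<in> finspan A"
  using finspan_add[OF _ finspan_scale[of g A "-1"], of f] by simp

lemma finspan_subset_finspan: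
  assumes "A \<subseteq> finspan B" "f \<in> finspan A"
  shows "f \<in> finspan B"
  using assms(2)
proof induction
  case (finspan_step a f c)
  with assms(1) show ?case by (metis finspan_add finspan_scale subsetD)
qed (simp add: finspan_zero)

lemma finspan_mono: "A \<subseteq> B \<Longrightarrow> f \<in> finspan A \<Longrightarrow> f \<in> finspan B"
  using finspan_subset_finspan finspan_superset by blast

lemma finspan_sum:
  "finite F \<Longrightarrow> (\<And>i. i \<in> F \<Longrightarrow> h i \<in> finspan A) \<Longrightarrow> (\<lambda>v. \<Sum>i\<in>F. c i * h i v) \<in> finspan A"
proof (induction F rule: finite_induct)
  case (insert x F)
  then have "(\<lambda>v. c x * h x v + (\<Sum>i\<in>F. c i * h i v)) \<in> finspan A"
    by (intro finspan_add finspan_scale) auto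
  then show ?case using insert by simp
qed (simp add: finspan_zero)

lemma finspan_imp_lin_span: "f \<in> finspan A \<Longrightarrow> f \<in> lin_span A"
proof (induction f rule: finspan.induct)
  case finspan_zero
  show ?case unfolding lin_span_def by (rule CollectI, rule exI[of _ 0]) auto
next
  case (finspan_step a f c)
  from finspan_step.IH obtain n :: nat and cs hs
    where hs: "\<forall>i<n. hs i \<in> A" and f: "f = (\<lambda>v. \<Sum>i<n. cs i * hs i v)"
    unfolding lin_span_def by blast
  have "(\<lambda>v. c * a v + f v) = (\<lambda>v. \<Sum>i<Suc n. (cs(n := c)) i * (hs(n := a)) i v)"
    using f by (auto intro!: ext sum.cong)
  moreover have "\<forall>i<Suc n. (hs(n := a)) i \<in> A"
    using hs finspan_step(1) by auto
  ultimately show ?case unfolding lin_span_def by blast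
qed

lemma finspan_vanishing:
  assumes "\<And>a y. a \<in> A \<Longrightarrow> y \<notin> L \<Longrightarrow> a y = 0" "f \<in> finspan A" "y \<notin> L"
  shows "f y = 0"
  using assms(2) by induction (use assms in auto)

section \<open>Orthogonal projection onto a finite span\<close>

definition finite_inner :: "'v set \<Rightarrow> ('v \<Rightarrow> complex) \<Rightarrow> ('v \<Rightarrow> complex) \<Rightarrow> complex" where
  "finite_inner L f g = (\<Sum>v\<in>L. f v * cnj (g v))"

lemma finite_inner_diff_left:
  "finite_inner L (\<lambda>v. a v - b v) g = finite_inner L a g - finite_inner L b g"
  unfolding finite_inner_def by (simp add: sum_subtractf algebra_simps)

lemma finite_inner_scale_left: "finite_inner L (\<lambda>v. c * a v) g = c * finite_inner L a g"
  unfolding finite_inner_def by (simp add: sum_distrib_left algebra_simps)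

lemma finite_inner_add_right:
  "finite_inner L f (\<lambda>v. a v + b v) = finite_inner L f a + finite_inner L f b"
  unfolding finite_inner_def by (simp add: sum.distrib algebra_simps)

lemma finite_inner_scale_right: "finite_inner L f (\<lambda>v. c * a v) = cnj c * finite_inner L f a"
  unfolding finite_inner_def by (simp add: sum_distrib_left algebra_simps)

lemma finite_inner_commute: "finite_inner L g f = cnj (finite_inner L f g)"
  unfolding finite_inner_def by (simp add: algebra_simps)

lemma finite_inner_self_eq_0:
  assumes "finite L" "finite_inner L s s = 0" "v \<in> L"
  shows "s v = 0"
proof -
  have "finite_inner L s s = of_real (\<Sum>v\<in>L. (cmod (s v))\<^sup>2)"
    unfolding finite_inner_def by (simp only: of_real_sum complex_norm_square)
  with assms(2) have "(\<Sum>v\<in>L. (cmod (s v))\<^sup>2) = 0"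
    by (metis of_real_eq_0_iff)
  with assms(1,3) show ?thesis by (simp add: sum_nonneg_eq_0_iff)
qed

lemma finite_inner_finspan_right:
  assumes "\<And>w. w \<in> W \<Longrightarrow> finite_inner L f w = 0" "g \<in> finspan W"
  shows "finite_inner L f g = 0"
  using assms(2)
proof induction
  case (finspan_step a g c)
  with assms(1) show ?case by (simp add: finite_inner_add_right finite_inner_scale_right)
qed (simp add: finite_inner_def)

lemma finite_inner_projection:
  assumes "finite L" "finite W"
  shows "\<exists>w\<in>finspan W. \<forall>w'\<in>W. finite_inner L (\<lambda>v. x v - w v) w' = 0"
  using assms(2)
proof (induction W arbitrary: x rule: finite_induct)
  case empty
  show ?case by (auto intro: finspan_zero)
next
  case (insert a W)
  obtain w1 where w1: "w1 \<in> finspan W" "\<forall>w'\<in>W. finite_inner L (\<lambda>v. x v - w1 v) w' = 0"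
    using insert.IH by blast
  obtain b where b: "b \<in> finspan W" "\<forall>w'\<in>W. finite_inner L (\<lambda>v. a v - b v) w' = 0"
    using insert.IH by blast
  \<comment> \<open>Gram--Schmidt: correct \<open>w1\<close> by the component of \<open>x - w1\<close> along \<open>s = a - b \<perp> W\<close>.\<close>
  define r where "r = (\<lambda>v. x v - w1 v)"
  define s where "s = (\<lambda>v. a v - b v)"
  define c where "c = finite_inner L r s / finite_inner L s s"
  define residue where "residue = (\<lambda>v. r v - c * s v)"
  have "w1 \<in> finspan (insert a W)" "b \<in> finspan (insert a W)" "a \<in> finspan (insert a W)"
    using w1(1) b(1) finspan_mono[OF subset_insertI] by (auto intro: finspan_superset)
  then have "(\<lambda>v. w1 v + c * s v) \<in> finspan (insert a W)"
    unfolding s_def by (intro finspan_add finspan_scale finspan_diff)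
  moreover have "(\<lambda>v. x v - (w1 v + c * s v)) = residue"
    unfolding residue_def r_def by (auto simp: algebra_simps)
  moreover have orth_W: "\<forall>w'\<in>W. finite_inner L residue w' = 0"
    using w1(2) b(2)
    by (simp add: residue_def finite_inner_diff_left finite_inner_scale_left r_def s_def)
  moreover have "finite_inner L residue a = 0"
  proof -
    have "finite_inner L residue s = finite_inner L r s - c * finite_inner L s s"
      by (simp add: residue_def finite_inner_diff_left finite_inner_scale_left)
    also have "\<dots> = 0"
    proof (cases "finite_inner L s s = 0")
      case True
      then have "\<forall>v\<in>L. s v = 0" using finite_inner_self_eq_0[OF assms(1)] by blast
      with True show ?thesis by (simp add: finite_inner_def)
    qed (simp add: c_def)
    moreover have "a = (\<lambda>v. b v + s v)" unfolding s_def by simp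
    moreover have "finite_inner L residue b = 0"
      using finite_inner_finspan_right[OF _ b(1)] orth_W by blast
    ultimately show ?thesis by (simp add: finite_inner_add_right)
  qed
  ultimately show ?case by (metis insert_iff)
qed

section \<open>Unit vectors, adjoints and density in \<open>l\<^sup>2\<close>\<close>

definition delta :: "'v \<Rightarrow> 'v \<Rightarrow> complex" where
  "delta v = (\<lambda>u. if u = v then 1 else 0)"

lemma finite_support_in_l2:
  assumes "finite L" "L \<subseteq> V" "\<And>y. y \<notin> L \<Longrightarrow> f y = 0"
  shows "f \<in> l2 V"
proof -
  have "(\<lambda>v. (cmod (f v))\<^sup>2) summable_on V \<longleftrightarrow> (\<lambda>v. (cmod (f v))\<^sup>2) summable_on L"
    by (rule summable_on_cong_neutral) (use assms in auto)
  then show ?thesis unfolding l2_def using assms by auto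
qed

lemma infsum_finite_support:
  fixes h :: "'v \<Rightarrow> 'b::{comm_monoid_add, t2_space}"
  assumes "finite L" "L \<subseteq> V" "\<And>y. y \<notin> L \<Longrightarrow> h y = 0"
  shows "infsum h V = sum h L"
proof -
  have "infsum h V = infsum h L"
    by (rule infsum_cong_neutral) (use assms in auto)
  then show ?thesis using assms(1) by simp
qed

lemma adj_eq_0I:
  assumes "\<And>g. g \<in> l2 V \<Longrightarrow> l2inner V (T g) r = 0"
  shows "adj V T r = (\<lambda>_. 0)"
  unfolding adj_def
proof (rule the_equality)
  show "(\<lambda>_. 0) \<in> l2 V \<and> (\<forall>g\<in>l2 V. l2inner V (T g) r = l2inner V g (\<lambda>_. 0))"
    using assms finite_support_in_l2[of "{}" V] by (simp add: l2inner_def)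
next
  fix h assume h: "h \<in> l2 V \<and> (\<forall>g\<in>l2 V. l2inner V (T g) r = l2inner V g h)"
  show "h = (\<lambda>_. 0)"
  proof
    fix y
    show "h y = 0"
    proof (cases "y \<in> V")
      case True
      have "delta y \<in> l2 V"
        by (rule finite_support_in_l2[of "{y}"]) (use True in \<open>auto simp: delta_def\<close>)
      then have "l2inner V (delta y) h = 0" using h assms by metis
      moreover have "l2inner V (delta y) h = cnj (h y)"
        unfolding l2inner_def
        by (subst infsum_finite_support[of "{y}"]) (use True in \<open>auto simp: delta_def\<close>)
      ultimately show ?thesis by simp
    qed (use h in \<open>auto simp: l2_def\<close>)
  qed
qed

lemma closed_span_eq_l2:
  assumes "\<And>v. v \<in> V \<Longrightarrow> delta v \<in> finspan A"
  shows "l2 V = closed_span V A"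
proof
  show "l2 V \<subseteq> closed_span V A"
  proof
    fix f assume f: "f \<in> l2 V"
    define q where "q = (\<lambda>v. (cmod (f v))\<^sup>2)"
    have q: "q summable_on V" using f unfolding l2_def q_def by blast
    have "\<exists>g\<in>lin_span A. l2norm V (\<lambda>v. f v - g v) < e" if e: "e > 0" for e
    proof -
      obtain F where F: "finite F" "F \<subseteq> V" "dist (sum q F) (infsum q V) \<le> e\<^sup>2 / 2"
        using infsum_finite_approximation[OF q, of "e\<^sup>2 / 2"] e by auto
      define g where "g = (\<lambda>y. \<Sum>v\<in>F. f v * delta v y)"
      have g: "g y = (if y \<in> F then f y else 0)" for y
        unfolding g_def delta_def using F(1) by (simp add: if_distrib cong: if_cong)
      have "infsum (\<lambda>v. (cmod (f v - g v))\<^sup>2) V = infsum q (V - F)"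
        by (rule infsum_cong_neutral) (auto simp: g q_def)
      also have "\<dots> = infsum q V - sum q F"
        using infsum_Diff[OF q _ F(2)] F(1) by simp
      also have "\<dots> \<le> e\<^sup>2 / 2"
        using abs_le_D2[OF F(3)[unfolded dist_real_def]] by simp
      also have "\<dots> < e\<^sup>2"
        using e by simp
      finally have "l2norm V (\<lambda>v. f v - g v) < e"
        unfolding l2norm_def using e by (simp add: real_sqrt_less_iff real_less_lsqrt)
      moreover have "g \<in> finspan A"
        unfolding g_def using F assms by (intro finspan_sum) auto
      ultimately show ?thesis using finspan_imp_lin_span by blast
    qed
    with f show "f \<in> closed_span V A" unfolding closed_span_def by blast
  qed
qed (auto simp: closed_span_def)

section \<open>Depth in a rooted directed tree\<close>

lemma directed_tree_unique_parent:
  "directed_tree V E \<Longrightarrow> (u, v) \<in> E \<Longrightarrow> (u', v) \<in> E \<Longrightarrow> u' = u"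
  unfolding directed_tree_def by blast

lemma directed_tree_source_reaches:
  assumes tree: "directed_tree V E" and source: "\<nexists>u. (u, r) \<in> E"
    and "(r, w) \<in> (E \<union> E\<inverse>)\<^sup>*"
  shows "(r, w) \<in> E\<^sup>*"
  using assms(3)
proof induction
  case (step y w)
  from step.hyps(2) show ?case
  proof
    assume "(y, w) \<in> E\<inverse>"
    then have wy: "(w, y) \<in> E" by simp
    with step.IH source obtain z where "(r, z) \<in> E\<^sup>*" "(z, y) \<in> E"
      by (metis rtranclE)
    with wy directed_tree_unique_parent[OF tree] show ?thesis by blast
  qed (use step.IH in auto)
qed simp

lemma tree_root_eq:
  assumes tree: "directed_tree V E" and "r \<in> V" "\<nexists>u. (u, r) \<in> E"
  shows "tree_root V E = r"
  unfolding tree_root_def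
proof (rule the_equality)
  fix r' assume r': "r' \<in> V \<and> (\<nexists>u. (u, r') \<in> E)"
  show "r' = r"
  proof (rule ccontr)
    assume "r' \<noteq> r"
    with assms r' have "(r, r') \<in> E\<^sup>*"
      using directed_tree_source_reaches[OF tree] by (auto simp: directed_tree_def)
    with \<open>r' \<noteq> r\<close> r' show False by (metis rtranclE)
  qed
qed (use assms in blast)

lemma rooted_tree_root:
  assumes tree: "directed_tree V E" and "has_root V E"
  shows "tree_root V E \<in> V" "\<nexists>u. (u, tree_root V E) \<in> E"
    and "w \<in> V \<Longrightarrow> (tree_root V E, w) \<in> E\<^sup>*"
proof -
  obtain r where r: "r \<in> V" "\<nexists>u. (u, r) \<in> E"
    using assms(2) unfolding has_root_def by blast
  have "(r, w) \<in> E\<^sup>*" if "w \<in> V" for w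
    using that r tree directed_tree_source_reaches[OF tree r(2)]
    by (cases "w = r") (auto simp: directed_tree_def)
  then show "tree_root V E \<in> V" "\<nexists>u. (u, tree_root V E) \<in> E"
    and "w \<in> V \<Longrightarrow> (tree_root V E, w) \<in> E\<^sup>*"
    using tree_root_eq[OF tree r] r by auto
qed

lemma par_eqI: "directed_tree V E \<Longrightarrow> (u, w) \<in> E \<Longrightarrow> par E w = u"
  unfolding par_def by (rule the_equality) (auto dest: directed_tree_unique_parent)

definition depth :: "'a set \<Rightarrow> ('a \<times> 'a) set \<Rightarrow> 'a \<Rightarrow> nat" where
  "depth V E w = (LEAST n. (tree_root V E, w) \<in> E ^^ n)"

lemma relpow_from_source_unique:
  assumes tree: "directed_tree V E" and source: "\<nexists>u. (u, r) \<in> E"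
  shows "(r, w) \<in> E ^^ n \<Longrightarrow> (r, w) \<in> E ^^ m \<Longrightarrow> n = m"
proof (induction n arbitrary: w m)
  case 0
  with source show ?case by (cases m) (auto elim: relpow_Suc_E)
next
  case (Suc n)
  from Suc.prems(1) obtain y where y: "(r, y) \<in> E ^^ n" "(y, w) \<in> E"
    by (metis relpow_Suc_E)
  with Suc.prems(2) source obtain m' y' where "m = Suc m'" "(r, y') \<in> E ^^ m'" "(y', w) \<in> E"
    by (cases m) (auto elim: relpow_Suc_E)
  with y Suc.IH directed_tree_unique_parent[OF tree] show ?case by blast
qed

lemma depth_relpow:
  assumes "directed_tree V E" "has_root V E" "w \<in> V"
  shows "(tree_root V E, w) \<in> E ^^ depth V E w"
  unfolding depth_def
  using rooted_tree_root(3)[OF assms] by (metis LeastI rtrancl_power)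

lemma depth_eqI:
  assumes "directed_tree V E" "has_root V E" "w \<in> V" "(tree_root V E, w) \<in> E ^^ n"
  shows "depth V E w = n"
  using relpow_from_source_unique[OF assms(1) rooted_tree_root(2)[OF assms(1,2)]]
    depth_relpow[OF assms(1-3)] assms(4) by blast

lemma depth_par:
  assumes tree: "directed_tree V E" and root: "has_root V E"
    and "w \<in> V" "w \<noteq> tree_root V E"
  shows "par E w \<in> V" "(par E w, w) \<in> E" "depth V E w = Suc (depth V E (par E w))"
proof -
  have E: "E \<subseteq> V \<times> V" using tree by (simp add: directed_tree_def)
  obtain m where "depth V E w = Suc m"
    using depth_relpow[OF tree root assms(3)] assms(4) by (cases "depth V E w") auto
  moreover obtain y where y: "(tree_root V E, y) \<in> E ^^ m" "(y, w) \<in> E"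
    using depth_relpow[OF tree root assms(3)] calculation by (metis relpow_Suc_E)
  moreover have "par E w = y" using par_eqI[OF tree y(2)] .
  ultimately show "par E w \<in> V" "(par E w, w) \<in> E" "depth V E w = Suc (depth V E (par E w))"
    using E depth_eqI[OF tree root _ y(1)] by auto
qed

lemma finite_depth_le:
  assumes tree: "directed_tree V E" and root: "has_root V E" and "locally_finite V E"
  shows "finite {w \<in> V. depth V E w \<le> n}"
proof (induction n)
  case 0
  have "{w \<in> V. depth V E w \<le> 0} \<subseteq> {tree_root V E}"
    using depth_relpow[OF tree root] by fastforce
  then show ?case using finite_subset by blast
next
  case (Suc n)
  let ?N = "{w \<in> V. depth V E w \<le> n}"
  have "{w \<in> V. depth V E w \<le> Suc n} \<subseteq> ?N \<union> (\<Union>u\<in>?N. Chi E u)"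
  proof
    fix w assume w: "w \<in> {w \<in> V. depth V E w \<le> Suc n}"
    show "w \<in> ?N \<union> (\<Union>u\<in>?N. Chi E u)"
    proof (cases "w = tree_root V E")
      case False
      with depth_par[OF tree root _ False] w show ?thesis by (auto simp: Chi_def)
    next
      case True
      have "depth V E (tree_root V E) = 0"
        using depth_eqI[OF tree root rooted_tree_root(1)[OF tree root]] by simp
      with True w show ?thesis by simp
    qed
  qed
  moreover have "finite (\<Union>u\<in>?N. Chi E u)"
    using Suc assms(3) unfolding locally_finite_def by auto
  ultimately show ?case using Suc finite_subset by blast
qed

lemma mpow_cong: "(\<And>i. i < k \<Longrightarrow> \<alpha> i = \<beta> i) \<Longrightarrow> mpow S \<alpha> k = mpow S \<beta> k"
  by (induction k) auto

lemma mpow_zero: "mpow S (\<lambda>_. 0) k = id"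
  by (induction k) auto

locale commuting_family =
  fixes d :: nat and S :: "nat \<Rightarrow> 'f \<Rightarrow> 'f" and X :: "'f set"
  assumes closed: "j < d \<Longrightarrow> f \<in> X \<Longrightarrow> S j f \<in> X"
    and commute: "i < d \<Longrightarrow> j < d \<Longrightarrow> f \<in> X \<Longrightarrow> S i (S j f) = S j (S i f)"
begin

lemma funpow_closed: "j < d \<Longrightarrow> f \<in> X \<Longrightarrow> (S j ^^ n) f \<in> X"
  by (induction n) (auto simp: closed)

lemma funpow_commute: "i < d \<Longrightarrow> j < d \<Longrightarrow> f \<in> X \<Longrightarrow> S i ((S j ^^ n) f) = (S j ^^ n) (S i f)"
proof (induction n)
  case (Suc n)
  then show ?case using commute[OF Suc.prems(1,2) funpow_closed[OF Suc.prems(2,3)]] by simp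
qed simp

lemma mpow_commute: "j < d \<Longrightarrow> k \<le> d \<Longrightarrow> f \<in> X \<Longrightarrow> S j (mpow S \<alpha> k f) = mpow S \<alpha> k (S j f)"
  by (induction k arbitrary: f) (auto simp: funpow_closed funpow_commute)

lemma mpow_fun_upd_Suc:
  "j < k \<Longrightarrow> k \<le> d \<Longrightarrow> f \<in> X \<Longrightarrow> mpow S (\<alpha>(j := Suc (\<alpha> j))) k f = mpow S \<alpha> k (S j f)"
proof (induction k arbitrary: f)
  case (Suc k)
  show ?case
  proof (cases "k = j")
    case True
    have cong: "mpow S (\<alpha>(j := Suc (\<alpha> j))) j = mpow S \<alpha> j" by (rule mpow_cong) auto
    have "mpow S (\<alpha>(j := Suc (\<alpha> j))) (Suc j) f = mpow S \<alpha> j ((S j ^^ Suc (\<alpha> j)) f)"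
      by (simp only: mpow.simps comp_apply cong fun_upd_same)
    also have "\<dots> = mpow S \<alpha> (Suc j) (S j f)"
      by (simp only: mpow.simps comp_apply funpow_Suc_right)
    finally show ?thesis unfolding True .
  next
    case False
    with Suc.prems have "j < k" "k < d" by auto
    with Suc.IH Suc.prems False show ?thesis
      by (simp add: funpow_closed funpow_commute)
  qed
qed simp

lemma S_mpow: "j < d \<Longrightarrow> f \<in> X \<Longrightarrow> S j (mpow S \<alpha> d f) = mpow S (\<alpha>(j := Suc (\<alpha> j))) d f"
  using mpow_commute[of j d f \<alpha>] mpow_fun_upd_Suc[of j d f \<alpha>] by simp

lemma orbit_invariant:
  assumes "K \<subseteq> X" "j < d"
  shows "S j ` (\<Union>\<alpha>. mpow S \<alpha> d ` K) \<subseteq> (\<Union>\<alpha>. mpow S \<alpha> d ` K)"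
proof
  fix y assume "y \<in> S j ` (\<Union>\<alpha>. mpow S \<alpha> d ` K)"
  then obtain \<alpha> f where "f \<in> K" "y = S j (mpow S \<alpha> d f)" by blast
  with assms have "f \<in> K" "y = mpow S (\<alpha>(j := Suc (\<alpha> j))) d f" by (auto simp: S_mpow)
  then show "y \<in> (\<Union>\<alpha>. mpow S \<alpha> d ` K)" by blast
qed

end

section \<open>Multishifts on a product of trees\<close>

locale multishift_product =
  fixes d :: nat and Vs :: "nat \<Rightarrow> 'a set" and Es :: "nat \<Rightarrow> ('a \<times> 'a) set"
    and lam :: "nat \<Rightarrow> (nat \<Rightarrow> 'a) \<Rightarrow> real"
    and V :: "(nat \<Rightarrow> 'a) set"
    and S :: "nat \<Rightarrow> ((nat \<Rightarrow> 'a) \<Rightarrow> complex) \<Rightarrow> ((nat \<Rightarrow> 'a) \<Rightarrow> complex)"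
  assumes V_eq: "V = prod_vertices d Vs" and S_eq: "S = multishift d Vs Es lam"
    and trees: "\<And>j. j < d \<Longrightarrow> directed_tree (Vs j) (Es j)"
    and rooted: "\<And>j. j < d \<Longrightarrow> has_root (Vs j) (Es j)"
    and loc_fin: "\<And>j. j < d \<Longrightarrow> locally_finite (Vs j) (Es j)"
    and S_l2: "\<And>j f. j < d \<Longrightarrow> f \<in> l2 V \<Longrightarrow> S j f \<in> l2 V"
    and commuting: "\<And>i j f. i < d \<Longrightarrow> j < d \<Longrightarrow> f \<in> l2 V \<Longrightarrow> S i (S j f) = S j (S i f)"
begin

sublocale commuting_family d S "l2 V"
  by unfold_locales (fact S_l2 commuting)+

definition total_depth :: "(nat \<Rightarrow> 'a) \<Rightarrow> nat" where
  "total_depth x = (\<Sum>j<d. depth (Vs j) (Es j) (x j))"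

definition level :: "nat \<Rightarrow> (nat \<Rightarrow> 'a) set" where
  "level n = {x \<in> V. total_depth x = n}"

definition level_below :: "nat \<Rightarrow> (nat \<Rightarrow> 'a) set" where
  "level_below n = {u \<in> V. Suc (total_depth u) = n}"

definition level_shifts :: "nat \<Rightarrow> ((nat \<Rightarrow> 'a) \<Rightarrow> complex) set" where
  "level_shifts n = (\<lambda>(j, u). S j (delta u)) ` ({..<d} \<times> level_below n)"

definition kernel_orbit :: "((nat \<Rightarrow> 'a) \<Rightarrow> complex) set" where
  "kernel_orbit = (\<Union>\<alpha>. mpow S \<alpha> d ` joint_adj_kernel V d S)"

lemma mem_V_iff: "x \<in> V \<longleftrightarrow> (\<forall>j<d. x j \<in> Vs j) \<and> (\<forall>j\<ge>d. x j = undefined)"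
  by (simp add: V_eq prod_vertices_def)

lemma S_apply:
  "S j f x =
    (if x \<in> V \<and> x j \<noteq> tree_root (Vs j) (Es j) then complex_of_real (lam j x) * f (par_j Es j x) else 0)"
  by (simp add: S_eq V_eq multishift_def)

lemma par_j_in_V:
  assumes "j < d" "x \<in> V" "x j \<noteq> tree_root (Vs j) (Es j)"
  shows "par_j Es j x \<in> V"
proof -
  have "x j \<in> Vs j" using assms mem_V_iff by auto
  with depth_par(1)[OF trees rooted] assms show ?thesis
    unfolding mem_V_iff par_j_def by auto
qed

lemma total_depth_par_j:
  assumes "j < d" "x \<in> V" "x j \<noteq> tree_root (Vs j) (Es j)"
  shows "total_depth x = Suc (total_depth (par_j Es j x))"
proof -
  have "x j \<in> Vs j" using assms mem_V_iff by auto
  with depth_par(3)[OF trees rooted] assms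
  have par: "depth (Vs j) (Es j) (x j) = Suc (depth (Vs j) (Es j) (par (Es j) (x j)))"
    by blast
  have split: "total_depth y = depth (Vs j) (Es j) (y j) + (\<Sum>i\<in>{..<d}-{j}. depth (Vs i) (Es i) (y i))"
    for y unfolding total_depth_def using assms(1) by (simp add: sum.remove)
  show ?thesis
    unfolding split[of x] split[of "par_j Es j x"] using par by (simp add: par_j_def)
qed

lemma finite_level: "finite (level n)"
proof -
  have "level n \<subseteq> PiE {..<d} (\<lambda>j. {w \<in> Vs j. depth (Vs j) (Es j) w \<le> n})"
  proof
    fix x assume x: "x \<in> level n"
    have "depth (Vs j) (Es j) (x j) \<le> n" if "j < d" for j
      using x that member_le_sum[of j "{..<d}" "\<lambda>j. depth (Vs j) (Es j) (x j)"]
      by (simp add: level_def total_depth_def)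
    with x show "x \<in> PiE {..<d} (\<lambda>j. {w \<in> Vs j. depth (Vs j) (Es j) w \<le> n})"
      unfolding PiE_iff extensional_def level_def mem_V_iff by auto
  qed
  moreover have "finite (PiE {..<d} (\<lambda>j. {w \<in> Vs j. depth (Vs j) (Es j) w \<le> n}))"
    by (intro finite_PiE finite_depth_le trees rooted loc_fin) auto
  ultimately show ?thesis using finite_subset by blast
qed

lemma finite_level_below: "finite (level_below n)"
  using finite_level[of "n - 1"] by (rule finite_subset[rotated]) (auto simp: level_def level_below_def)

lemma finite_level_shifts: "finite (level_shifts n)"
  unfolding level_shifts_def using finite_level_below by simp

lemma S_delta_support:
  assumes "j < d" "S j (delta u) y \<noteq> 0"
  shows "y \<in> level (Suc (total_depth u))"
proof -
  from assms(2) have "y \<in> V" "y j \<noteq> tree_root (Vs j) (Es j)" "par_j Es j y = u"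
    by (auto simp: S_apply delta_def split: if_splits)
  with par_j_in_V total_depth_par_j assms(1) show ?thesis by (auto simp: level_def)
qed

lemma S_delta_in_level_shifts: "j < d \<Longrightarrow> u \<in> level_below n \<Longrightarrow> S j (delta u) \<in> level_shifts n"
  unfolding level_shifts_def by (rule image_eqI[where x="(j, u)"]) auto

lemma level_shifts_support: "a \<in> level_shifts n \<Longrightarrow> y \<notin> level n \<Longrightarrow> a y = 0"
  unfolding level_shifts_def level_below_def using S_delta_support by fastforce

lemma S_level_expansion:
  assumes "j < d" "y \<in> level n"
  shows "S j g y = (\<Sum>u\<in>level_below n. g u * S j (delta u) y)"
proof (cases "y \<in> V \<and> y j \<noteq> tree_root (Vs j) (Es j)")
  case True
  let ?p = "par_j Es j y"
  have "?p \<in> level_below n"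
    using par_j_in_V total_depth_par_j True assms by (auto simp: level_def level_below_def)
  moreover have "(\<Sum>u\<in>level_below n. g u * S j (delta u) y) =
      (\<Sum>u\<in>level_below n. if u = ?p then g ?p * lam j y else 0)"
    by (rule sum.cong) (auto simp: S_apply delta_def True)
  ultimately show ?thesis using True finite_level_below by (simp add: S_apply)
qed (auto simp: S_apply)

lemma S_finspan: "f \<in> finspan B \<Longrightarrow> S j f \<in> finspan (S j ` B)"
proof (induction f rule: finspan.induct)
  case finspan_zero
  have "S j (\<lambda>_. 0) = (\<lambda>_. 0)" by (auto simp: S_apply)
  then show ?case by (simp add: finspan.finspan_zero)
next
  case (finspan_step a f c)
  have "S j (\<lambda>v. c * a v + f v) = (\<lambda>x. c * S j a x + S j f x)"
    by (auto simp: S_apply algebra_simps)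
  with finspan_step show ?case by (simp add: finspan.finspan_step)
qed

lemma orthogonal_level_shifts_in_kernel:
  assumes support: "\<And>y. y \<notin> level n \<Longrightarrow> r y = 0"
    and orth: "\<And>a. a \<in> level_shifts n \<Longrightarrow> finite_inner (level n) r a = 0"
  shows "r \<in> joint_adj_kernel V d S"
proof -
  have L: "finite (level n)" "level n \<subseteq> V" using finite_level by (auto simp: level_def)
  have "l2inner V (S j g) r = 0" if j: "j < d" for j g
  proof -
    have "l2inner V (S j g) r = (\<Sum>y\<in>level n. (\<Sum>u\<in>level_below n. g u * S j (delta u) y) * cnj (r y))"
      unfolding l2inner_def using S_level_expansion[OF j]
      by (subst infsum_finite_support[OF L]) (auto simp: support)
    also have "\<dots> = (\<Sum>y\<in>level n. \<Sum>u\<in>level_below n. g u * (S j (delta u) y * cnj (r y)))"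
      by (simp add: sum_distrib_right mult.assoc)
    also have "\<dots> = (\<Sum>u\<in>level_below n. \<Sum>y\<in>level n. g u * (S j (delta u) y * cnj (r y)))"
      by (rule sum.swap)
    also have "\<dots> = (\<Sum>u\<in>level_below n. g u * finite_inner (level n) (S j (delta u)) r)"
      by (simp add: finite_inner_def sum_distrib_left)
    also have "\<dots> = 0"
      using orth S_delta_in_level_shifts[OF j] finite_inner_commute[of "level n" "S j (delta _)" r]
      by (intro sum.neutral ballI) simp
    finally show ?thesis .
  qed
  then show ?thesis
    unfolding joint_adj_kernel_def
    using finite_support_in_l2[OF L support] by (auto intro: adj_eq_0I)
qed

lemma kernel_subset_orbit: "joint_adj_kernel V d S \<subseteq> kernel_orbit"
proof
  fix f assume "f \<in> joint_adj_kernel V d S"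
  then have "f \<in> mpow S (\<lambda>_. 0) d ` joint_adj_kernel V d S" by (simp add: mpow_zero)
  then show "f \<in> kernel_orbit" unfolding kernel_orbit_def by blast
qed

lemma S_kernel_orbit: "j < d \<Longrightarrow> S j ` kernel_orbit \<subseteq> kernel_orbit"
  unfolding kernel_orbit_def by (intro orbit_invariant) (auto simp: joint_adj_kernel_def)

lemma delta_in_finspan: "x \<in> V \<Longrightarrow> delta x \<in> finspan kernel_orbit"
proof (induction "total_depth x" arbitrary: x rule: less_induct)
  case less
  define n where "n = total_depth x"
  obtain w where w: "w \<in> finspan (level_shifts n)"
    and orth: "\<And>a. a \<in> level_shifts n \<Longrightarrow> finite_inner (level n) (\<lambda>y. delta x y - w y) a = 0"
    using finite_inner_projection[OF finite_level finite_level_shifts] by blast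
  have "level_shifts n \<subseteq> finspan kernel_orbit"
    using less S_finspan finspan_mono[OF S_kernel_orbit]
    by (auto simp: level_shifts_def level_below_def n_def)
  with w have w_span: "w \<in> finspan kernel_orbit" by (rule finspan_subset_finspan[rotated])
  have "(\<lambda>y. delta x y - w y) \<in> joint_adj_kernel V d S"
  proof (rule orthogonal_level_shifts_in_kernel[OF _ orth])
    fix y assume y: "y \<notin> level n"
    have "w y = 0"
      by (rule finspan_vanishing[of "level_shifts n" "level n" w y]) (use level_shifts_support w y in auto)
    moreover have "y \<noteq> x" using y less(2) by (auto simp: level_def n_def)
    ultimately show "delta x y - w y = 0" by (simp add: delta_def)
  qed
  then have "(\<lambda>y. w y + (delta x y - w y)) \<in> finspan kernel_orbit"
    using kernel_subset_orbit by (intro finspan_add w_span finspan_superset) blast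
  then show ?case by simp
qed

end

theorem mainTheorem1:
  fixes d :: nat
    and Vs :: "nat \<Rightarrow> 'a set" and Es :: "nat \<Rightarrow> ('a \<times> 'a) set"
    and lam :: "nat \<Rightarrow> (nat \<Rightarrow> 'a) \<Rightarrow> real"
  defines "V \<equiv> prod_vertices d Vs"
    and "S \<equiv> multishift d Vs Es lam"
  assumes trees: "\<And>j. j < d \<Longrightarrow> directed_tree (Vs j) (Es j)"
    and rooted: "\<And>j. j < d \<Longrightarrow> has_root (Vs j) (Es j)"
    and loc_fin: "\<And>j. j < d \<Longrightarrow> locally_finite (Vs j) (Es j)"
    and leafless: "\<And>j. j < d \<Longrightarrow> leafless (Vs j) (Es j)"
    and V_count: "countable V" and V_inf: "infinite V"
    and lam_pos: "\<And>j v. j < d \<Longrightarrow> v \<in> V \<Longrightarrow> v \<noteq> prod_root d Vs Es \<Longrightarrow> lam j v > 0"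
    and bounded: "\<And>j. j < d \<Longrightarrow> bounded_op V (S j)"
    and commuting: "\<And>i j f. i < d \<Longrightarrow> j < d \<Longrightarrow> f \<in> l2 V \<Longrightarrow> S i (S j f) = S j (S i f)"
  shows "l2 V = closed_span V (\<Union>\<alpha>. mpow S \<alpha> d ` joint_adj_kernel V d S)"
proof -
  interpret multishift_product d Vs Es lam V S
  proof
    show "\<And>j f. j < d \<Longrightarrow> f \<in> l2 V \<Longrightarrow> S j f \<in> l2 V"
      using bounded unfolding bounded_op_def by blast
  qed (use trees rooted loc_fin commuting in \<open>simp_all add: V_def S_def\<close>)
  show ?thesis
    using closed_span_eq_l2[OF delta_in_finspan] unfolding kernel_orbit_def .
qed

end
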